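(* Let $G$ be a topological group. Then $G$ is $\alpha_{1.5}$ if and only if $G$ is $\alpha_1$.
   Context: Convention: a "sequence" is a countably infinite set. A countably infinite set $A$ in a topological space $X$ converges to $x\in X$ if $x\notin A$ and every neighborhood of $x$ contains all but finitely many elements of $A$ (equivalently, some or every bijective enumeration of $A$ converges to $x$ with no term equal to $x$). A topological space $X$ is $\alpha_1$ (respectively $\alpha_{1.5}$) if for each $x\in X$ and all pairwise disjoint sequences $S_1,S_2,\dots\subseteq X$, each converging to $x$, there is a sequence $S\subseteq\bigcup_n S_n$ converging to $x$ such that $S_n\setminus S$ is finite for all $n$ (respectively, for infinitely many $n$). *)

theory Defs
  imports "HOL-Analysis.Analysis"
begin

text \<open>A "sequence" is a countably infinite set. A sequence A converges to x
  if x is not in A and every neighbourhood of x contains all but finitely many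
  elements of A.\<close>
definition seq_converges :: "'a::topological_space set \<Rightarrow> 'a \<Rightarrow> bool" where
  "seq_converges A x \<longleftrightarrow> countable A \<and> infinite A \<and> x \<notin> A \<and>
     (\<forall>U. open U \<and> x \<in> U \<longrightarrow> finite (A - U))"

definition alpha1_space :: "'a::topological_space itself \<Rightarrow> bool" where
  "alpha1_space _ \<longleftrightarrow>
     (\<forall>(x::'a) (S::nat \<Rightarrow> 'a set).
        (\<forall>m n. m \<noteq> n \<longrightarrow> S m \<inter> S n = {}) \<and> (\<forall>n. seq_converges (S n) x) \<longrightarrow>
        (\<exists>T. T \<subseteq> (\<Union>n. S n) \<and> seq_converges T x \<and> (\<forall>n. finite (S n - T))))"

definition alpha1_5_space :: "'a::topological_space itself \<Rightarrow> bool" where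
  "alpha1_5_space _ \<longleftrightarrow>
     (\<forall>(x::'a) (S::nat \<Rightarrow> 'a set).
        (\<forall>m n. m \<noteq> n \<longrightarrow> S m \<inter> S n = {}) \<and> (\<forall>n. seq_converges (S n) x) \<longrightarrow>
        (\<exists>T. T \<subseteq> (\<Union>n. S n) \<and> seq_converges T x \<and> infinite {n. finite (S n - T)}))"

definition topological_group :: "'a::{topological_space, group_add} itself \<Rightarrow> bool" where
  "topological_group _ \<longleftrightarrow>
     continuous_on UNIV (\<lambda>p::'a \<times> 'a. fst p + snd p) \<and> continuous_on UNIV (uminus :: 'a \<Rightarrow> 'a)"

end

theory Submission
  imports Defs
begin

text \<open>Let sequences \<open>S k\<close> converge to \<open>x\<close>, with
  enumerations \<open>s k\<close>. Choose points \<open>g n k i \<in> S n\<close> and put \<open>h n k i = s k i + (- x + g n k i)\<close>. For fixed \<open>n\<close>, the set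
  \<open>E n\<close> of all \<open>g n k i\<close>, \<open>h n k i\<close> with \<open>k \<le> n\<close> converges to \<open>x\<close> by continuity of the group
  operations, and choosing the \<open>g n k i\<close> greedily makes all these points distinct, so the \<open>E n\<close>
  are pairwise disjoint. Now \<open>\<alpha>\<^sub>1\<^sub>.\<^sub>5\<close> yields \<open>T'\<close> converging to \<open>x\<close> that almost contains
  \<open>E n\<close> for infinitely many \<open>n\<close>. For each \<open>k\<close> pick such an \<open>n \<ge> k\<close> and keep those
  \<open>s k i\<close> for which \<open>g n k i\<close> and \<open>h n k i\<close> both lie in \<open>T'\<close>. The resulting \<open>T\<close> almost
  contains every \<open>S k\<close>, and it converges to \<open>x\<close> because \<open>s k i = h n k i + (- g n k i + x)\<close>:
  only finitely many points of \<open>T'\<close> lie outside a given neighbourhood of \<open>x\<close>, and by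
  disjointness they meet only finitely many \<open>E n\<close>.\<close>

lemma nat_choice_avoiding:
  assumes "\<And>n. infinite (A n)"
    and "\<And>n f. finite (B n f)"
    and "\<And>n f f'. (\<And>i. i < n \<Longrightarrow> f i = f' i) \<Longrightarrow> B n f = B n f'"
  obtains f :: "nat \<Rightarrow> 'a" where "\<And>n. f n \<in> A n" "\<And>n. f n \<notin> B n f"
proof -
  define F :: "nat \<Rightarrow> nat \<Rightarrow> 'a"
    where "F = rec_nat (\<lambda>_. undefined) (\<lambda>n f. f(n := SOME z. z \<in> A n - B n f))"
  have F_Suc: "F (Suc n) = (F n)(n := SOME z. z \<in> A n - B n (F n))" for n
    by (simp add: F_def)
  have F_stable: "F m i = F (Suc i) i" if "i < m" for i m
    using that by (induction m) (auto simp: F_Suc less_Suc_eq)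
  define f where "f n = F (Suc n) n" for n
  have B_eq: "B n (F n) = B n f" for n
    unfolding f_def by (rule assms(3)) (rule F_stable)
  have "f n \<in> A n - B n (F n)" for n
  proof -
    have "infinite (A n - B n (F n))"
      using assms(1,2) by (simp add: Diff_infinite_finite)
    then have "\<exists>z. z \<in> A n - B n (F n)"
      by (metis ex_in_conv finite.emptyI)
    then show ?thesis
      unfolding f_def F_Suc fun_upd_same by (rule someI_ex)
  qed
  then show thesis
    using that B_eq by blast
qed

lemma distinct_translates_choice:
  fixes A :: "'j::countable \<Rightarrow> 'a::group_add set" and c :: "'j \<Rightarrow> 'a"
  assumes "\<And>j. infinite (A j)"
  obtains f where "\<And>j. f j \<in> A j" "\<And>j. c j + f j \<noteq> y"
    and "\<And>i j. i \<noteq> j \<Longrightarrow> f i \<noteq> f j"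
    and "\<And>i j. i \<noteq> j \<Longrightarrow> f i \<noteq> c j + f j"
    and "\<And>i j. i \<noteq> j \<Longrightarrow> c i + f i \<noteq> c j + f j"
proof -
  define c' where "c' m = c (from_nat m)" for m
  \<comment> \<open>Avoiding \<open>B m f\<close> keeps both \<open>f m\<close> and \<open>c' m + f m\<close> away from all earlier \<open>f i\<close> and \<open>c' i + f i\<close>.\<close>
  define B where "B m f = insert (- c' m + y)
    (\<Union>i<m. {f i, c' i + f i, - c' m + f i, - c' m + (c' i + f i)})" for m f
  obtain f' where f'_in: "\<And>m. f' m \<in> A (from_nat m)" and f'_avoids: "\<And>m. f' m \<notin> B m f'"
  proof (rule nat_choice_avoiding[of "\<lambda>m. A (from_nat m)" B])
    show "infinite (A (from_nat m))" for m
      by (rule assms)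
    show "finite (B m f)" for m f
      by (simp add: B_def)
    show "B m f = B m f'" if "\<And>i. i < m \<Longrightarrow> f i = f' i" for m f f'
      using that by (simp add: B_def)
  qed blast
  have shift: "c' m + f' m = z \<longleftrightarrow> f' m = - c' m + z" for m z
    by (metis add_minus_cancel minus_add_cancel)
  have ne_y: "c' m + f' m \<noteq> y" for m
    using f'_avoids[of m] by (simp add: B_def shift)
  have ne_earlier: "f' m \<noteq> f' i \<and> f' m \<noteq> c' i + f' i \<and> c' m + f' m \<noteq> f' i
      \<and> c' m + f' m \<noteq> c' i + f' i" if "i < m" for i m
    using f'_avoids[of m] that by (simp add: B_def shift)
  define f :: "'j \<Rightarrow> 'a" where "f j = f' (to_nat j)" for j
  have ne_other: "f i \<noteq> f j \<and> f i \<noteq> c j + f j \<and> c i + f i \<noteq> c j + f j" if "i \<noteq> j" for i j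
  proof -
    have "to_nat i \<noteq> to_nat j"
      using that by simp
    then consider "to_nat i < to_nat j" | "to_nat j < to_nat i"
      by linarith
    then show ?thesis
      using ne_earlier unfolding f_def c'_def by cases (metis from_nat_to_nat)+
  qed
  show thesis
  proof (rule that)
    show "f j \<in> A j" "c j + f j \<noteq> y" for j
      using f'_in[of "to_nat j"] ne_y[of "to_nat j"] by (simp_all add: f_def c'_def)
  qed (use ne_other in blast)+
qed

lemma seq_converges_range_iff:
  assumes "inj f" and "x \<notin> range f"
  shows "seq_converges (range f) x \<longleftrightarrow> f \<longlonglongrightarrow> x"
proof -
  have "finite (range f - U) \<longleftrightarrow> eventually (\<lambda>i. f i \<in> U) sequentially" for U
  proof -
    have "range f - U = f ` {i. f i \<notin> U}"
      by auto
    then show ?thesis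
      using inj_on_subset[OF assms(1) subset_UNIV]
      by (simp add: finite_image_iff eventually_cofinite flip: cofinite_eq_sequentially)
  qed
  then show ?thesis
    using assms by (auto simp: seq_converges_def tendsto_def range_inj_infinite)
qed

lemma seq_converges_subset:
  assumes "seq_converges A x" and "B \<subseteq> A" and "infinite B"
  shows "seq_converges B x"
proof -
  have "finite (B - U)" if "open U" "x \<in> U" for U
    using assms(1,2) that unfolding seq_converges_def by (metis Diff_mono finite_subset order_refl)
  then show ?thesis
    using assms unfolding seq_converges_def by (auto intro: countable_subset)
qed

lemma seq_converges_imp_tendsto:
  assumes "seq_converges A x" and "inj f" and "range f \<subseteq> A"
  shows "f \<longlonglongrightarrow> x"
proof -
  have "seq_converges (range f) x"
    using seq_converges_subset[OF assms(1,3) range_inj_infinite[OF assms(2)]] .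
  moreover have "x \<notin> range f"
    using assms unfolding seq_converges_def by blast
  ultimately show ?thesis
    using seq_converges_range_iff[OF assms(2)] by blast
qed

lemma seq_converges_Un:
  "seq_converges A x \<Longrightarrow> seq_converges B x \<Longrightarrow> seq_converges (A \<union> B) x"
  by (simp add: seq_converges_def Un_Diff)

lemma seq_converges_UN:
  assumes "finite I" and "I \<noteq> {}" and "\<And>i. i \<in> I \<Longrightarrow> seq_converges (A i) x"
  shows "seq_converges (\<Union>i\<in>I. A i) x"
  using assms by (induction I rule: finite_ne_induct) (simp_all add: seq_converges_Un)

lemma continuous_on_square_nhds:
  fixes f :: "'a::topological_space \<times> 'a \<Rightarrow> 'b::topological_space"
  assumes "continuous_on UNIV f" and "open U" and "f (x, x) \<in> U"
  obtains V where "open V" "x \<in> V" "V \<times> V \<subseteq> f -` U"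
proof -
  have "open (f -` U)" and "(x, x) \<in> f -` U"
    using assms by (simp_all add: open_vimage)
  then obtain A B where "open A" "open B" "(x, x) \<in> A \<times> B" "A \<times> B \<subseteq> f -` U"
    by (rule open_prod_elim)
  then show thesis
    by (intro that[of "A \<inter> B"]) auto
qed

lemma topological_group_nhds:
  fixes x :: "'a::{topological_space, group_add}"
  assumes "topological_group TYPE('a)" and "open U" and "x \<in> U"
  obtains V where "open V" "x \<in> V"
    and "\<And>p q. p \<in> V \<Longrightarrow> q \<in> V \<Longrightarrow> p + (- x + q) \<in> U \<and> p + (- q + x) \<in> U"
proof -
  have plus: "continuous_on UNIV (\<lambda>p::'a \<times> 'a. fst p + snd p)"
    and uminus: "continuous_on UNIV (uminus :: 'a \<Rightarrow> 'a)"
    using assms(1) by (simp_all add: topological_group_def)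
  have add: "continuous_on UNIV (\<lambda>p. f p + g p)"
    if "continuous_on UNIV f" "continuous_on UNIV g" for f g :: "'a \<times> 'a \<Rightarrow> 'a"
    using continuous_on_compose2[OF plus continuous_on_Pair[OF that]] by simp
  have neg: "continuous_on UNIV (\<lambda>p. - f p)" if "continuous_on UNIV f" for f :: "'a \<times> 'a \<Rightarrow> 'a"
    using continuous_on_compose2[OF uminus that] by simp
  let ?\<psi> = "\<lambda>(p, q). (p + (- x + q), p + (- q + x))"
  have cont: "continuous_on UNIV ?\<psi>"
    unfolding case_prod_beta'
    by (intro continuous_on_Pair add neg continuous_on_fst continuous_on_snd
        continuous_on_id continuous_on_const)
  have "?\<psi> (x, x) \<in> U \<times> U"
    using assms(3) by simp
  then obtain V where V: "open V" "x \<in> V" "V \<times> V \<subseteq> ?\<psi> -` (U \<times> U)"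
    by (rule continuous_on_square_nhds[OF cont open_Times[OF assms(2,2)]])
  show thesis
  proof (rule that[OF V(1,2)])
    fix p q assume "p \<in> V" "q \<in> V"
    then have "(p, q) \<in> ?\<psi> -` (U \<times> U)"
      using V(3) by blast
    then show "p + (- x + q) \<in> U \<and> p + (- q + x) \<in> U"
      by simp
  qed
qed

lemma topological_group_tendsto_shift:
  fixes x :: "'a::{topological_space, group_add}"
  assumes "topological_group TYPE('a)" and "(f \<longlongrightarrow> x) F" and "(g \<longlongrightarrow> x) F"
  shows "((\<lambda>i. f i + (- x + g i)) \<longlongrightarrow> x) F"
proof (rule topological_tendstoI)
  fix U assume "open U" "x \<in> U"
  with assms(1) obtain V where V: "open V" "x \<in> V"
    "\<And>p q. p \<in> V \<Longrightarrow> q \<in> V \<Longrightarrow> p + (- x + q) \<in> U"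
    by (metis topological_group_nhds)
  have "eventually (\<lambda>i. f i \<in> V) F" "eventually (\<lambda>i. g i \<in> V) F"
    using V(1,2) assms(2,3) by (simp_all add: topological_tendstoD)
  then show "eventually (\<lambda>i. f i + (- x + g i) \<in> U) F"
    by eventually_elim (use V(3) in blast)
qed

locale diagonal_family =
  fixes x :: "'a::{topological_space, group_add}"
    and S :: "nat \<Rightarrow> 'a set" and s :: "nat \<Rightarrow> nat \<Rightarrow> 'a"
    and g h :: "nat \<Rightarrow> nat \<Rightarrow> nat \<Rightarrow> 'a"
  assumes group: "topological_group TYPE('a)"
    and S_converges: "\<And>n. seq_converges (S n) x"
    and s_bij: "\<And>k. bij_betw (s k) UNIV (S k)"
    and g_in: "\<And>n k i. g n k i \<in> S n"
    and h_def: "\<And>n k i. h n k i = s k i + (- x + g n k i)"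
    and h_neq: "\<And>n k i. h n k i \<noteq> x"
    and g_inject: "\<And>n k i n' k' i'. g n k i = g n' k' i' \<Longrightarrow> (n, k, i) = (n', k', i')"
    and h_inject: "\<And>n k i n' k' i'. h n k i = h n' k' i' \<Longrightarrow> (n, k, i) = (n', k', i')"
    and g_neq_h: "\<And>n k i n' k' i'. g n k i \<noteq> h n' k' i'"
begin

definition E :: "nat \<Rightarrow> 'a set" where
  "E n = (\<Union>k\<le>n. range (g n k) \<union> range (h n k))"

lemma s_in: "s k i \<in> S k"
  by (rule bij_betw_apply[OF s_bij]) simp

lemma inj_s: "inj (s k)"
  using s_bij by (simp add: bij_betw_def)

lemma inj_g: "inj (g n k)"
  by (rule injI) (use g_inject in blast)

lemma inj_h: "inj (h n k)"
  by (rule injI) (use h_inject in blast)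

lemma s_eq: "s k i = h n k i + (- g n k i + x)"
  by (simp add: h_def add.assoc)

lemma x_notin_S: "x \<notin> S n"
  using S_converges[of n] by (simp add: seq_converges_def)

lemma g_tendsto: "g n k \<longlonglongrightarrow> x"
  by (rule seq_converges_imp_tendsto[OF S_converges[of n] inj_g]) (auto simp: g_in)

lemma s_tendsto: "s k \<longlonglongrightarrow> x"
  by (rule seq_converges_imp_tendsto[OF S_converges[of k] inj_s]) (auto simp: s_in)

lemma h_tendsto: "h n k \<longlonglongrightarrow> x"
proof -
  have "h n k = (\<lambda>i. s k i + (- x + g n k i))"
    by (simp add: h_def fun_eq_iff)
  then show ?thesis
    using topological_group_tendsto_shift[OF group s_tendsto g_tendsto] by simp
qed

lemma E_converges: "seq_converges (E n) x"
  unfolding E_def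
proof (rule seq_converges_UN)
  fix k
  have "x \<notin> range (g n k)"
    using g_in x_notin_S by blast
  moreover have "x \<notin> range (h n k)"
    using h_neq by (metis rangeE)
  ultimately show "seq_converges (range (g n k) \<union> range (h n k)) x"
    by (simp add: seq_converges_Un seq_converges_range_iff inj_g inj_h g_tendsto h_tendsto)
qed auto

lemma E_disjoint:
  assumes "m \<noteq> n"
  shows "E m \<inter> E n = {}"
  using assms by (auto simp: E_def g_neq_h g_neq_h[symmetric] dest: g_inject h_inject)

lemma finite_g_notin:
  assumes "finite (E n - T)" and "k \<le> n"
  shows "finite {i. g n k i \<notin> T}"
proof -
  have "{i. g n k i \<notin> T} = g n k -` (E n - T)"
    using assms(2) by (auto simp: E_def)
  then show ?thesis
    using finite_vimageI[OF assms(1) inj_g] by simp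
qed

lemma finite_h_notin:
  assumes "finite (E n - T)" and "k \<le> n"
  shows "finite {i. h n k i \<notin> T}"
proof -
  have "{i. h n k i \<notin> T} = h n k -` (E n - T)"
    using assms(2) by (auto simp: E_def intro: rangeI)
  then show ?thesis
    using finite_vimageI[OF assms(1) inj_h] by simp
qed

lemma eventually_E_inter_subset:
  assumes "seq_converges T x" and "open V" and "x \<in> V"
  obtains M where "\<And>n. M \<le> n \<Longrightarrow> E n \<inter> T \<subseteq> V"
proof -
  have "finite (T - V)"
    using assms unfolding seq_converges_def by blast
  moreover have "finite {n. y \<in> E n}" for y
  proof (cases "\<exists>m. y \<in> E m")
    case True
    then obtain m where "y \<in> E m"
      by blast
    then have "{n. y \<in> E n} \<subseteq> {m}"
      using E_disjoint by blast
    then show ?thesis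
      by (rule finite_subset) simp
  qed simp
  ultimately have "finite (\<Union>y\<in>T - V. {n. y \<in> E n})"
    by blast
  moreover have "{n. \<not> E n \<inter> T \<subseteq> V} \<subseteq> (\<Union>y\<in>T - V. {n. y \<in> E n})"
    by blast
  ultimately have "finite {n. \<not> E n \<inter> T \<subseteq> V}"
    by (rule finite_subset[rotated])
  then obtain M where "{n. \<not> E n \<inter> T \<subseteq> V} \<subseteq> {..<M}"
    using finite_nat_bounded by blast
  then show thesis
    by (intro that[of M]) auto
qed

definition selected :: "(nat \<Rightarrow> nat) \<Rightarrow> 'a set \<Rightarrow> 'a set" where
  "selected \<nu> T' = {s k i | k i. g (\<nu> k) k i \<in> T' \<and> h (\<nu> k) k i \<in> T'}"

lemma selected_subset: "selected \<nu> T' \<subseteq> (\<Union>n. S n)"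
  unfolding selected_def using s_in by blast

lemma finite_diff_selected:
  assumes "finite (E (\<nu> k) - T')" and "k \<le> \<nu> k"
  shows "finite (S k - selected \<nu> T')"
proof -
  have "S k - selected \<nu> T' \<subseteq> s k ` ({i. g (\<nu> k) k i \<notin> T'} \<union> {i. h (\<nu> k) k i \<notin> T'})"
    using s_bij unfolding selected_def bij_betw_def by blast
  then show ?thesis
    by (rule finite_subset) (simp add: finite_g_notin finite_h_notin assms)
qed

lemma finite_selected_diff:
  assumes "seq_converges T' x" and "\<And>k. k \<le> \<nu> k" and "open U" and "x \<in> U"
  shows "finite (selected \<nu> T' - U)"
proof -
  obtain V where "open V" "x \<in> V"
    and V: "\<And>p q. p \<in> V \<Longrightarrow> q \<in> V \<Longrightarrow> p + (- x + q) \<in> U \<and> p + (- q + x) \<in> U"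
    using assms(3,4) by (auto elim: topological_group_nhds[OF group])
  obtain M where M: "\<And>n. M \<le> n \<Longrightarrow> E n \<inter> T' \<subseteq> V"
    by (rule eventually_E_inter_subset[OF assms(1) \<open>open V\<close> \<open>x \<in> V\<close>]) blast
  have "selected \<nu> T' - U \<subseteq> (\<Union>k<M. S k - U)"
  proof
    fix y assume "y \<in> selected \<nu> T' - U"
    then obtain k i where y: "y = s k i" "y \<notin> U"
      and in_T': "g (\<nu> k) k i \<in> T'" "h (\<nu> k) k i \<in> T'"
      unfolding selected_def by blast
    have "k < M"
    proof (rule ccontr)
      assume "\<not> k < M"
      then have "E (\<nu> k) \<inter> T' \<subseteq> V"
        using M assms(2) by (meson le_trans not_less)
      moreover have "g (\<nu> k) k i \<in> E (\<nu> k)" "h (\<nu> k) k i \<in> E (\<nu> k)"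
        using assms(2) by (auto simp: E_def)
      ultimately have "h (\<nu> k) k i + (- g (\<nu> k) k i + x) \<in> U"
        using in_T' V by blast
      then show False
        using y by (simp flip: s_eq)
    qed
    then show "y \<in> (\<Union>k<M. S k - U)"
      using y s_in by blast
  qed
  moreover have "finite (\<Union>k<M. S k - U)"
    using S_converges assms(3,4) unfolding seq_converges_def by blast
  ultimately show ?thesis
    by (rule finite_subset)
qed

lemma alpha1_sequence_exists:
  assumes "seq_converges T' x" and "infinite {n. finite (E n - T')}"
  shows "\<exists>T. T \<subseteq> (\<Union>n. S n) \<and> seq_converges T x \<and> (\<forall>n. finite (S n - T))"
proof -
  obtain \<nu> where \<nu>_ge: "\<And>k. k \<le> \<nu> k" and \<nu>_fin: "\<And>k. finite (E (\<nu> k) - T')"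
    using assms(2) unfolding infinite_nat_iff_unbounded_le by (metis mem_Collect_eq)
  let ?T = "selected \<nu> T'"
  have cofinite: "finite (S k - ?T)" for k
    using finite_diff_selected \<nu>_fin \<nu>_ge by blast
  have "infinite ?T"
  proof
    assume "finite ?T"
    then have "finite (S 0 - ?T \<union> ?T)"
      using cofinite[of 0] by blast
    then have "finite (S 0)"
      by (rule finite_subset[rotated]) blast
    then show False
      using S_converges[of 0] unfolding seq_converges_def by blast
  qed
  moreover have "countable ?T"
    using S_converges
    by (intro countable_subset[OF selected_subset] countable_UN) (simp_all add: seq_converges_def)
  moreover have "x \<notin> ?T"
    using selected_subset x_notin_S by blast
  ultimately have "seq_converges ?T x"
    unfolding seq_converges_def using finite_selected_diff[OF assms(1) \<nu>_ge] by blast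
  then show ?thesis
    using selected_subset cofinite by blast
qed

end

lemma alpha1_imp_alpha1_5:
  assumes "alpha1_space TYPE('a::topological_space)"
  shows "alpha1_5_space TYPE('a)"
  unfolding alpha1_5_space_def
proof (intro allI impI)
  fix x :: 'a and S :: "nat \<Rightarrow> 'a set"
  assume "(\<forall>m n. m \<noteq> n \<longrightarrow> S m \<inter> S n = {}) \<and> (\<forall>n. seq_converges (S n) x)"
  from assms[unfolded alpha1_space_def, rule_format, OF this]
  obtain T where "T \<subseteq> (\<Union>n. S n)" "seq_converges T x" "\<forall>n. finite (S n - T)"
    by blast
  then show "\<exists>T. T \<subseteq> (\<Union>n. S n) \<and> seq_converges T x \<and> infinite {n. finite (S n - T)}"
    by auto
qed

lemma diagonal_family_exists:
  fixes x :: "'a::{topological_space, group_add}"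
  assumes group: "topological_group TYPE('a)" and S_converges: "\<And>n. seq_converges (S n) x"
  shows "\<exists>s g h. diagonal_family x S s g h"
proof -
  define s where "s k = from_nat_into (S k)" for k
  have s_bij: "bij_betw (s k) UNIV (S k)" for k
    using S_converges[of k] unfolding s_def seq_converges_def by (simp add: bij_betw_from_nat_into)
  have S_infinite: "infinite (S n)" for n
    using S_converges[of n] by (simp add: seq_converges_def)
  define c :: "nat \<times> nat \<times> nat \<Rightarrow> 'a" where "c = (\<lambda>(n, k, i). s k i + - x)"
  obtain f :: "nat \<times> nat \<times> nat \<Rightarrow> 'a" where
    f_in: "\<And>j. f j \<in> S (fst j)" and f_neq: "\<And>j. c j + f j \<noteq> x" and
    f_distinct: "\<And>j j'. j \<noteq> j' \<Longrightarrow> f j \<noteq> f j'"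
      "\<And>j j'. j \<noteq> j' \<Longrightarrow> f j \<noteq> c j' + f j'"
      "\<And>j j'. j \<noteq> j' \<Longrightarrow> c j + f j \<noteq> c j' + f j'"
    by (rule distinct_translates_choice[of "\<lambda>j. S (fst j)" c x, OF S_infinite]) blast
  define g where "g n k i = f (n, k, i)" for n k i
  define h where "h n k i = c (n, k, i) + f (n, k, i)" for n k i
  have f_neq_self: "f j \<noteq> c j + f j" for j
  proof (cases j)
    case (fields n k i)
    have "s k i \<noteq> x"
      using s_bij S_converges[of k] unfolding bij_betw_def seq_converges_def by blast
    then show ?thesis
      unfolding fields c_def by (metis add_right_cancel add_0 right_minus_eq diff_conv_add_uminus case_prod_conv)
  qed
  have "diagonal_family x S s g h"
  proof unfold_locales
    show "g n k i \<in> S n" for n k i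
      using f_in[of "(n, k, i)"] by (simp add: g_def)
    show "h n k i = s k i + (- x + g n k i)" for n k i
      by (simp add: h_def g_def c_def add.assoc diff_conv_add_uminus del: add_uminus_conv_diff)
    show "h n k i \<noteq> x" for n k i
      unfolding h_def by (rule f_neq)
    show "(n, k, i) = (n', k', i')" if "g n k i = g n' k' i'" for n k i n' k' i'
      using f_distinct(1)[of "(n, k, i)" "(n', k', i')"] that unfolding g_def by argo
    show "(n, k, i) = (n', k', i')" if "h n k i = h n' k' i'" for n k i n' k' i'
      using f_distinct(3)[of "(n, k, i)" "(n', k', i')"] that unfolding h_def by argo
    show "g n k i \<noteq> h n' k' i'" for n k i n' k' i'
    proof (cases "(n, k, i) = (n', k', i')")
      case True
      then show ?thesis
        using f_neq_self[of "(n, k, i)"] by (simp add: g_def h_def)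
    next
      case False
      then show ?thesis
        using f_distinct(2) by (simp add: g_def h_def)
    qed
  qed (fact group S_converges s_bij)+
  then show ?thesis
    by blast
qed

lemma topological_group_alpha1_5_imp_alpha1:
  assumes group: "topological_group TYPE('a::{topological_space, group_add})"
    and alpha1_5: "alpha1_5_space TYPE('a)"
  shows "alpha1_space TYPE('a)"
  unfolding alpha1_space_def
proof (intro allI impI)
  fix x :: 'a and S :: "nat \<Rightarrow> 'a set"
  assume "(\<forall>m n. m \<noteq> n \<longrightarrow> S m \<inter> S n = {}) \<and> (\<forall>n. seq_converges (S n) x)"
  then have "\<And>n. seq_converges (S n) x"
    by blast
  then obtain s g h where "diagonal_family x S s g h"
    using diagonal_family_exists[OF group] by blast
  then interpret diagonal_family x S s g h .
  have "(\<forall>m n. m \<noteq> n \<longrightarrow> E m \<inter> E n = {}) \<and> (\<forall>n. seq_converges (E n) x)"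
    using E_disjoint E_converges by blast
  from alpha1_5[unfolded alpha1_5_space_def, rule_format, OF this]
  obtain T' where "seq_converges T' x" "infinite {n. finite (E n - T')}"
    by blast
  then show "\<exists>T. T \<subseteq> (\<Union>n. S n) \<and> seq_converges T x \<and> (\<forall>n. finite (S n - T))"
    by (rule alpha1_sequence_exists)
qed

theorem theorem1p2:
  assumes "topological_group TYPE('a::{topological_space, group_add})"
  shows "alpha1_5_space TYPE('a) \<longleftrightarrow> alpha1_space TYPE('a)"
  using assms alpha1_imp_alpha1_5 topological_group_alpha1_5_imp_alpha1 by blast

end
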